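(* Let $p\in(1,\infty)$ and let $Y$ be a Banach space admitting an equivalent norm with $(\beta)$-modulus of power type $p$. Then there is a constant $C=C(Y)>0$ such that for every integer $l\ge1$, $$c_Y(P^\omega_l)\ge C\,l^{1/p}.$$
   Context: For a Banach space $X$ with closed unit ball $B_X$ and a sequence $(y_n)_{n\ge1}$ in $X$, let $\mathrm{sep}[(y_n)]:=\inf\{\|y_m-y_n\|: m\neq n\}$. The $(\beta)$-modulus of a norm is $$\overline{\beta}_X(t):=1-\sup\Big\{\inf_{n\ge1}\tfrac{\|x+y_n\|}{2}\ :\ x\in B_X,\ (y_n)_{n\ge1}\subset B_X,\ \mathrm{sep}[(y_n)]\ge t\Big\},$$ and the norm has $(\beta)$-modulus of power type $p$ if there is $c>0$ with $\overline{\beta}_X(t)\ge ct^p$ for all $t\in(0,2]$. The parasol graph $P^\omega_1$ has vertex set $\{r,b,s\}\cup\{t_i:i\ge1\}$ and edges $\{r,b\}$, $\{b,t_i\}$, $\{t_i,s\}$ ($i\ge1$). For $l\ge2$, $P^\omega_l$ is obtained from $P^\omega_{l-1}$ by replacing every edge $\{u,v\}$ of $P^\omega_{l-1}$ by a copy of $P^\omega_1$, identifying the vertex $r$ of the copy with one endpoint of the edge and the vertex $s$ of the copy with the other endpoint (the claim holds for any such choice of identifications). Each $P^\omega_l$ carries the unweighted shortest-path metric. The distortion of an injective map is $\mathrm{dist}(f)=\mathrm{Lip}(f)\mathrm{Lip}(f^{-1})$ and $c_Y(M):=\inf\{\mathrm{dist}(f): f\colon M\to Y\text{ injective}\}$ ($+\infty$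 if no bi-Lipschitz embedding exists). *)

theory Defs
  imports "HOL-Analysis.Analysis"
begin

definition is_norm_fun :: "('a::real_vector \<Rightarrow> real) \<Rightarrow> bool" where
  "is_norm_fun N \<longleftrightarrow> (\<forall>x y. N (x + y) \<le> N x + N y) \<and> (\<forall>c x. N (c *\<^sub>R x) = \<bar>c\<bar> * N x)
     \<and> (\<forall>x. N x = 0 \<longrightarrow> x = 0)"

definition equivalent_norm :: "('a::real_normed_vector \<Rightarrow> real) \<Rightarrow> bool" where
  "equivalent_norm N \<longleftrightarrow> is_norm_fun N \<and>
     (\<exists>a b. 0 < a \<and> 0 < b \<and> (\<forall>x. a * norm x \<le> N x \<and> N x \<le> b * norm x))"

definition unit_ballN :: "('a \<Rightarrow> real) \<Rightarrow> 'a set" where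
  "unit_ballN N = {x. N x \<le> 1}"

definition sepN :: "('a::real_vector \<Rightarrow> real) \<Rightarrow> (nat \<Rightarrow> 'a) \<Rightarrow> ereal" where
  "sepN N y = (INF mn \<in> {(m, n). m \<noteq> n}. ereal (N (y (fst mn) - y (snd mn))))"

text \<open>Sup of the empty set is -infinity (ereal), so the modulus is +infinity then.\<close>
definition beta_modulus :: "('a::real_vector \<Rightarrow> real) \<Rightarrow> real \<Rightarrow> ereal" where
  "beta_modulus N t = 1 - (SUP xy \<in> {(x, y). x \<in> unit_ballN N \<and> range y \<subseteq> unit_ballN N
        \<and> sepN N y \<ge> ereal t}. (INF n. ereal (N (fst xy + snd xy n) / 2)))"

definition beta_power_type :: "('a::real_vector \<Rightarrow> real) \<Rightarrow> real \<Rightarrow> bool" where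
  "beta_power_type N p \<longleftrightarrow> (\<exists>c>0. \<forall>t. 0 < t \<and> t \<le> 2 \<longrightarrow> beta_modulus N t \<ge> ereal (c * t powr p))"

definition distortion :: "'v set \<Rightarrow> ('v \<Rightarrow> 'v \<Rightarrow> real) \<Rightarrow> ('v \<Rightarrow> 'a::real_normed_vector) \<Rightarrow> ereal" where
  "distortion V d f =
     (SUP uv \<in> {(u, v). u \<in> V \<and> v \<in> V \<and> u \<noteq> v}. ereal (norm (f (fst uv) - f (snd uv)) / d (fst uv) (snd uv)))
   * (SUP uv \<in> {(u, v). u \<in> V \<and> v \<in> V \<and> u \<noteq> v}. ereal (d (fst uv) (snd uv) / norm (f (fst uv) - f (snd uv))))"

text \<open>c_Y(M); it is +infinity when no injective map has finite distortion.\<close>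
definition c_dist :: "'a::real_normed_vector itself \<Rightarrow> 'v set \<Rightarrow> ('v \<Rightarrow> 'v \<Rightarrow> real) \<Rightarrow> ereal" where
  "c_dist _ V d = (INF f \<in> {f :: 'v \<Rightarrow> 'a. inj_on f V}. distortion V d f)"

text \<open>Edges of P_1: {r,b}, {b,t_i}, {t_i,s}.\<close>
datatype plabel = RB | BT nat | TS nat

text \<open>Internal vertices of P_1: b and t_i.\<close>
datatype pint = PB | PT nat

text \<open>Vertices: the two original endpoints R, S, and the internal vertices of the copy of P_1
  substituted for the edge with address es.\<close>
datatype pvert = R | S | Inner "plabel list" pint

text \<open>An edge of P_l is addressed by a list of l labels, the head being the most recent one.
  The parameter sigma chooses, for each edge es being replaced, whether r of the copy is
  identified with the first (False) or second (True) endpoint of es.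
  pend sigma es gives the two endpoints of edge es.\<close>
fun pend :: "(plabel list \<Rightarrow> bool) \<Rightarrow> plabel list \<Rightarrow> pvert \<times> pvert" where
  "pend \<sigma> [] = (R, S)"
| "pend \<sigma> (a # es) =
     (let uv = pend \<sigma> es;
          r = (if \<sigma> es then snd uv else fst uv);
          s = (if \<sigma> es then fst uv else snd uv)
      in (case a of RB \<Rightarrow> (r, Inner es PB)
                  | BT i \<Rightarrow> (Inner es PB, Inner es (PT i))
                  | TS i \<Rightarrow> (Inner es (PT i), s)))"

definition padj :: "(plabel list \<Rightarrow> bool) \<Rightarrow> nat \<Rightarrow> pvert \<Rightarrow> pvert \<Rightarrow> bool" where
  "padj \<sigma> l u v \<longleftrightarrow> (\<exists>es. length es = l \<and> (pend \<sigma> es = (u, v) \<or> pend \<sigma> es = (v, u)))"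

definition pverts :: "(plabel list \<Rightarrow> bool) \<Rightarrow> nat \<Rightarrow> pvert set" where
  "pverts \<sigma> l = {u. \<exists>v. padj \<sigma> l u v}"

definition pdist :: "(plabel list \<Rightarrow> bool) \<Rightarrow> nat \<Rightarrow> pvert \<Rightarrow> pvert \<Rightarrow> real" where
  "pdist \<sigma> l u v = real (LEAST n. (padj \<sigma> l ^^ n) u v)"

end

theory Submission
  imports Defs
begin

text \<open>Let f embed P_l with Lip(f) \<le> A and Lip(f^-1) \<le> B, and measure in the equivalent norm N
  whose (\<beta>)-modulus is at least c t^p.  Then every edge of P_l is mapped to a segment of length
  at most U, while the tips t_i, t_j of a common parasol at depth k, being at graph distance at
  least 3^(l-k-1), stay at distance at least Lo 3^(l-k-1) (U, Lo comparable to A and 1/B).  In each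
  parasol the path from b through any tip t_i to s is a fork over a separated sequence, so the
  (\<beta>)-modulus shortens it by a definite amount; by induction an edge at depth l - j has image
  of length at most 3^j (U - j \<delta>) with \<delta> = c/3 Lo^p U^(1-p).  Since d(R, S) = 3^l, this gives
  Lo \<le> U - l \<delta>, i.e. (U/Lo)^p \<ge> c l / 3, whence AB \<ge> C l^(1/p).  The graph-distance lower bounds
  come from functions that change little along edges: a height function and bumps around tips.\<close>

lemma padj_sym: "padj \<sigma> l u v \<Longrightarrow> padj \<sigma> l v u"
  unfolding padj_def by blast

lemma relpowp_padj_sym: "(padj \<sigma> l ^^ n) u v \<Longrightarrow> (padj \<sigma> l ^^ n) v u"
proof (induction n arbitrary: v)
  case 0
  then show ?case by simp
next
  case (Suc n)
  from Suc.prems obtain w where "(padj \<sigma> l ^^ n) u w" "padj \<sigma> l w v"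
    by (rule relpowp_Suc_E)
  then show ?case
    using Suc.IH padj_sym relpowp_Suc_I2 by metis
qed

lemma relpowp_padj_pend:
  assumes "length E \<le> l"
  shows "(padj \<sigma> l ^^ 3 ^ (l - length E)) (fst (pend \<sigma> E)) (snd (pend \<sigma> E))"
  using assms
proof (induction "l - length E" arbitrary: E)
  case 0
  then have "padj \<sigma> l (fst (pend \<sigma> E)) (snd (pend \<sigma> E))"
    unfolding padj_def by auto
  with 0 show ?case by (metis power_0 relpowp_1)
next
  case (Suc j)
  define r where "r = (if \<sigma> E then snd (pend \<sigma> E) else fst (pend \<sigma> E))"
  define s where "s = (if \<sigma> E then fst (pend \<sigma> E) else snd (pend \<sigma> E))"
  have IH: "(padj \<sigma> l ^^ 3 ^ j) (fst (pend \<sigma> (a # E))) (snd (pend \<sigma> (a # E)))" for a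
  proof -
    have "j = l - length (a # E)" "length (a # E) \<le> l"
      using Suc.hyps(2) by auto
    then show ?thesis
      using Suc.hyps(1) by blast
  qed
  have "(padj \<sigma> l ^^ 3 ^ j) r (Inner E PB)"
    using IH[of RB] by (simp add: Let_def r_def)
  moreover have "(padj \<sigma> l ^^ 3 ^ j) (Inner E PB) (Inner E (PT 0))"
    using IH[of "BT 0"] by simp
  moreover have "(padj \<sigma> l ^^ 3 ^ j) (Inner E (PT 0)) s"
    using IH[of "TS 0"] by (simp add: Let_def s_def)
  ultimately have "(padj \<sigma> l ^^ (3 ^ j + 3 ^ j + 3 ^ j)) r s"
    by (meson relpowp_trans)
  moreover have "(3::nat) ^ j + 3 ^ j + 3 ^ j = 3 ^ Suc j"
    by simp
  ultimately have "(padj \<sigma> l ^^ 3 ^ Suc j) r s"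
    by metis
  then show ?case
    using relpowp_padj_sym Suc.hyps(2) unfolding r_def s_def by (cases "\<sigma> E") auto
qed

definition is_endpoint :: "(plabel list \<Rightarrow> bool) \<Rightarrow> plabel list \<Rightarrow> pvert \<Rightarrow> bool" where
  "is_endpoint \<sigma> E x \<longleftrightarrow> x = fst (pend \<sigma> E) \<or> x = snd (pend \<sigma> E)"

lemma endpoint_in_pverts:
  assumes "is_endpoint \<sigma> E x" "length E \<le> l"
  shows "x \<in> pverts \<sigma> l"
proof -
  have path: "(padj \<sigma> l ^^ Suc (3 ^ (l - length E) - 1)) (fst (pend \<sigma> E)) (snd (pend \<sigma> E))"
    using relpowp_padj_pend[OF assms(2)] by simp
  obtain w where "padj \<sigma> l (fst (pend \<sigma> E)) w"
    using relpowp_Suc_D2[OF path] by blast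
  moreover obtain w' where "padj \<sigma> l (snd (pend \<sigma> E)) w'"
    using relpowp_Suc_D2[OF relpowp_padj_sym[OF path]] by blast
  ultimately show ?thesis
    using assms(1) unfolding is_endpoint_def pverts_def by blast
qed

lemma pdist_padj:
  assumes "padj \<sigma> l u v" "u \<noteq> v"
  shows "pdist \<sigma> l u v = 1"
proof -
  have "(LEAST n. (padj \<sigma> l ^^ n) u v) = 1"
    using assms by (intro Least_equality) (auto simp: Suc_le_eq gr0_conv_Suc elim: relpowp_E)
  then show ?thesis
    unfolding pdist_def by simp
qed

lemma relpowp_padj_lipschitz:
  assumes "\<And>E. length E = l \<Longrightarrow> \<bar>\<phi> (fst (pend \<sigma> E)) - \<phi> (snd (pend \<sigma> E))\<bar> \<le> \<epsilon>"
    and "(padj \<sigma> l ^^ n) u v"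
  shows "\<bar>\<phi> u - \<phi> v\<bar> \<le> real n * \<epsilon>"
  using assms(2)
proof (induction n arbitrary: v)
  case 0
  then show ?case by simp
next
  case (Suc n)
  from Suc.prems obtain w where w: "(padj \<sigma> l ^^ n) u w" "padj \<sigma> l w v"
    by (rule relpowp_Suc_E)
  then obtain E where E: "length E = l" "pend \<sigma> E = (w, v) \<or> pend \<sigma> E = (v, w)"
    unfolding padj_def by blast
  then have "\<bar>\<phi> w - \<phi> v\<bar> \<le> \<epsilon>"
    using assms(1)[OF E(1)] by (auto simp: abs_minus_commute)
  then show ?case
    using Suc.IH[OF w(1)] by (simp add: algebra_simps)
qed

text \<open>The path hypothesis is needed: between disconnected vertices pdist is an unspecified LEAST.\<close>
lemma pdist_ge_lipschitz:
  assumes "\<And>E. length E = l \<Longrightarrow> \<bar>\<phi> (fst (pend \<sigma> E)) - \<phi> (snd (pend \<sigma> E))\<bar> \<le> \<epsilon>"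
    and "(padj \<sigma> l ^^ n) u v"
  shows "\<bar>\<phi> u - \<phi> v\<bar> \<le> pdist \<sigma> l u v * \<epsilon>"
  unfolding pdist_def
  using relpowp_padj_lipschitz[OF assms(1) LeastI[of "\<lambda>n. (padj \<sigma> l ^^ n) u v", OF assms(2)]] .

subsection \<open>A height function\<close>

text \<open>R and S get heights 0 and 1, and b and t_i the two third-points of the edge they subdivide,
  so every edge of P_l spans a height difference of exactly 3^-l.\<close>
definition child_heights :: "plabel \<Rightarrow> real \<Rightarrow> real \<Rightarrow> real \<times> real" where
  "child_heights a hr hs = (case a of
       RB \<Rightarrow> (hr, hr + (hs - hr) / 3)
     | BT i \<Rightarrow> (hr + (hs - hr) / 3, hr + 2 * (hs - hr) / 3)
     | TS i \<Rightarrow> (hr + 2 * (hs - hr) / 3, hs))"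

fun edge_heights :: "(plabel list \<Rightarrow> bool) \<Rightarrow> plabel list \<Rightarrow> real \<times> real" where
  "edge_heights \<sigma> [] = (0, 1)"
| "edge_heights \<sigma> (a # E) = (if \<sigma> E
     then child_heights a (snd (edge_heights \<sigma> E)) (fst (edge_heights \<sigma> E))
     else child_heights a (fst (edge_heights \<sigma> E)) (snd (edge_heights \<sigma> E)))"

fun height :: "(plabel list \<Rightarrow> bool) \<Rightarrow> pvert \<Rightarrow> real" where
  "height \<sigma> R = 0"
| "height \<sigma> S = 1"
| "height \<sigma> (Inner E PB) = snd (edge_heights \<sigma> (RB # E))"
| "height \<sigma> (Inner E (PT i)) = snd (edge_heights \<sigma> (BT i # E))"

lemma edge_heights_pend:
  "edge_heights \<sigma> E = (height \<sigma> (fst (pend \<sigma> E)), height \<sigma> (snd (pend \<sigma> E)))"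
proof (induction E)
  case Nil
  then show ?case by simp
next
  case (Cons a E)
  then show ?case
    by (cases a) (auto simp: Let_def child_heights_def split: prod.splits)
qed

lemma height_pend_diff:
  "\<bar>height \<sigma> (fst (pend \<sigma> E)) - height \<sigma> (snd (pend \<sigma> E))\<bar> = (1/3) ^ length E"
proof -
  have "\<bar>snd (edge_heights \<sigma> E) - fst (edge_heights \<sigma> E)\<bar> = (1/3) ^ length E"
  proof (induction E)
    case Nil
    then show ?case by simp
  next
    case (Cons a E)
    have child: "\<bar>snd (child_heights a x y) - fst (child_heights a x y)\<bar> = \<bar>y - x\<bar> / 3" for x y
      by (cases a) (auto simp: child_heights_def field_simps abs_if)
    show ?case
      using Cons child by (simp only: edge_heights.simps split: if_split) (simp add: abs_minus_commute)
  qed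
  then show ?thesis
    by (simp add: edge_heights_pend abs_minus_commute)
qed

lemma pdist_R_S: "pdist \<sigma> l R S \<ge> 3 ^ l"
proof -
  have "(padj \<sigma> l ^^ 3 ^ l) R S"
    using relpowp_padj_pend[of "[]" l \<sigma>] by simp
  then have "\<bar>height \<sigma> R - height \<sigma> S\<bar> \<le> pdist \<sigma> l R S * (1/3) ^ l"
    by (rule pdist_ge_lipschitz[rotated]) (simp add: height_pend_diff)
  then show ?thesis
    by (simp add: field_simps)
qed

subsection \<open>Tips of a common parasol are far apart\<close>

lemma endpoint_Cons: "is_endpoint \<sigma> (a # E) x \<Longrightarrow> is_endpoint \<sigma> E x \<or> (\<exists>q. x = Inner E q)"
  by (cases a) (auto simp: is_endpoint_def Let_def split: if_splits)

lemma endpoint_Inner_suffix: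
  "is_endpoint \<sigma> E (Inner es q) \<Longrightarrow> \<exists>pre a. E = pre @ a # es \<and> is_endpoint \<sigma> (a # es) (Inner es q)"
proof (induction E)
  case Nil
  then show ?case by (simp add: is_endpoint_def)
next
  case (Cons a E)
  from endpoint_Cons[OF Cons.prems] show ?case
  proof
    assume "is_endpoint \<sigma> E (Inner es q)"
    then obtain pre b where "E = pre @ b # es" "is_endpoint \<sigma> (b # es) (Inner es q)"
      using Cons.IH by blast
    then show ?thesis
      by (intro exI[of _ "a # pre"] exI[of _ b]) simp
  next
    assume "\<exists>q'. Inner es q = Inner E q'"
    then show ?thesis
      using Cons.prems by (intro exI[of _ "[]"] exI[of _ a]) simp
  qed
qed

lemma endpoint_Inner_length: "is_endpoint \<sigma> E (Inner es q) \<Longrightarrow> length es < length E"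
  using endpoint_Inner_suffix by fastforce

lemma endpoint_append:
  "is_endpoint \<sigma> (pre @ E) x \<Longrightarrow> is_endpoint \<sigma> E x \<or> (\<exists>pre' q. x = Inner (pre' @ E) q)"
proof (induction pre arbitrary: x)
  case Nil
  then show ?case by simp
next
  case (Cons a pre)
  then show ?case
    using endpoint_Cons[of \<sigma> a "pre @ E" x] by (metis append_Cons)
qed

lemma endpoint_tip:
  assumes "is_endpoint \<sigma> (c # es) (Inner es (PT i))"
  shows "c = BT i \<or> c = TS i"
proof -
  have "\<not> is_endpoint \<sigma> es (Inner es (PT i))"
    using endpoint_Inner_length by blast
  with assms show ?thesis
    by (cases c) (auto simp: is_endpoint_def Let_def split: if_splits)
qed

definition below_tip :: "plabel list \<Rightarrow> nat \<Rightarrow> pvert \<Rightarrow> bool" where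
  "below_tip es i x \<longleftrightarrow> x = Inner es (PT i) \<or>
     (\<exists>pre q. x = Inner (pre @ BT i # es) q \<or> x = Inner (pre @ TS i # es) q)"

text \<open>A bump of height 3^-(k+1) around the tip t_i = Inner es (PT i) of a parasol of depth k,
  supported on the two edges b t_i and t_i s.  It vanishes on their outer ends b and s, so it
  changes by at most 3^-l along every edge of P_l.\<close>
definition tent :: "(plabel list \<Rightarrow> bool) \<Rightarrow> plabel list \<Rightarrow> nat \<Rightarrow> pvert \<Rightarrow> real" where
  "tent \<sigma> es i x = (if below_tip es i x
     then (1/3) ^ Suc (length es) - \<bar>height \<sigma> x - height \<sigma> (Inner es (PT i))\<bar> else 0)"

lemma tent_tips:
  "tent \<sigma> es i (Inner es (PT i)) = (1/3) ^ Suc (length es)"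
  "j \<noteq> i \<Longrightarrow> tent \<sigma> es i (Inner es (PT j)) = 0"
  unfolding tent_def below_tip_def by (auto dest: arg_cong[of _ _ length])

lemma tent_endpoint_through:
  assumes "E = pre @ c # es" "c = BT i \<or> c = TS i" "is_endpoint \<sigma> E x"
  shows "tent \<sigma> es i x = (1/3) ^ Suc (length es) - \<bar>height \<sigma> x - height \<sigma> (Inner es (PT i))\<bar>"
proof (cases "below_tip es i x")
  case True
  then show ?thesis unfolding tent_def by simp
next
  case False
  let ?t = "Inner es (PT i)"
  have "is_endpoint \<sigma> (c # es) x"
    using endpoint_append[of \<sigma> pre "c # es" x] assms False unfolding below_tip_def by auto
  then have "(x = Inner es PB \<and> c = BT i) \<or> (x = snd (pend \<sigma> (TS i # es)) \<and> c = TS i)"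
    using assms(2) False unfolding is_endpoint_def below_tip_def by (auto simp: Let_def)
  moreover have "\<bar>height \<sigma> (Inner es PB) - height \<sigma> ?t\<bar> = (1/3) ^ Suc (length es)"
    using height_pend_diff[of \<sigma> "BT i # es"] by simp
  moreover have "\<bar>height \<sigma> (snd (pend \<sigma> (TS i # es))) - height \<sigma> ?t\<bar> = (1/3) ^ Suc (length es)"
    using height_pend_diff[of \<sigma> "TS i # es"] by (simp add: Let_def abs_minus_commute)
  ultimately show ?thesis
    unfolding tent_def using False by auto
qed

lemma tent_endpoint_not_through:
  assumes "\<not> (\<exists>pre. E = pre @ BT i # es \<or> E = pre @ TS i # es)" "is_endpoint \<sigma> E x"
  shows "tent \<sigma> es i x = 0"
proof -
  have "\<not> below_tip es i x"
  proof
    assume "below_tip es i x"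
    then consider "x = Inner es (PT i)"
      | pre q where "x = Inner (pre @ BT i # es) q \<or> x = Inner (pre @ TS i # es) q"
      unfolding below_tip_def by blast
    then show False
    proof cases
      case 1
      then obtain pre c where "E = pre @ c # es" "is_endpoint \<sigma> (c # es) (Inner es (PT i))"
        using endpoint_Inner_suffix assms(2) by blast
      then show False
        using endpoint_tip assms(1) by blast
    next
      case 2
      then show False
        using endpoint_Inner_suffix assms by (metis append.assoc append_Cons)
    qed
  qed
  then show ?thesis
    unfolding tent_def by simp
qed

lemma tent_pend_diff:
  "\<bar>tent \<sigma> es i (fst (pend \<sigma> E)) - tent \<sigma> es i (snd (pend \<sigma> E))\<bar> \<le> (1/3) ^ length E"
proof (cases "\<exists>pre. E = pre @ BT i # es \<or> E = pre @ TS i # es")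
  case True
  then obtain pre c where "E = pre @ c # es" "c = BT i \<or> c = TS i"
    by blast
  from tent_endpoint_through[OF this] show ?thesis
    using height_pend_diff[of \<sigma> E] unfolding is_endpoint_def by force
next
  case False
  then show ?thesis
    using tent_endpoint_not_through[OF False] unfolding is_endpoint_def by simp
qed

lemma pdist_tips:
  assumes "length es < l" "i \<noteq> j"
  shows "pdist \<sigma> l (Inner es (PT i)) (Inner es (PT j)) \<ge> 3 ^ (l - Suc (length es))"
proof -
  let ?k = "l - Suc (length es)"
  have "(padj \<sigma> l ^^ 3 ^ ?k) (Inner es (PT i)) (Inner es PB)"
    using relpowp_padj_sym[OF relpowp_padj_pend[of "BT i # es" l \<sigma>]] assms(1) by simp
  moreover have "(padj \<sigma> l ^^ 3 ^ ?k) (Inner es PB) (Inner es (PT j))"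
    using relpowp_padj_pend[of "BT j # es" l \<sigma>] assms(1) by simp
  ultimately have "(padj \<sigma> l ^^ (3 ^ ?k + 3 ^ ?k)) (Inner es (PT i)) (Inner es (PT j))"
    by (rule relpowp_trans)
  then have "\<bar>tent \<sigma> es i (Inner es (PT i)) - tent \<sigma> es i (Inner es (PT j))\<bar>
      \<le> pdist \<sigma> l (Inner es (PT i)) (Inner es (PT j)) * (1/3) ^ l"
    by (rule pdist_ge_lipschitz[rotated]) (metis tent_pend_diff)
  moreover have "(3::real) ^ l = 3 ^ Suc (length es) * 3 ^ ?k"
    using assms(1) by (metis Suc_leI le_add_diff_inverse power_add)
  ultimately have "3 ^ Suc (length es) * 3 ^ ?k
      \<le> 3 ^ Suc (length es) * pdist \<sigma> l (Inner es (PT i)) (Inner es (PT j))"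
    using assms(2) by (simp add: tent_tips field_simps)
  then show ?thesis
    by (rule mult_left_le_imp_le) simp
qed

subsection \<open>Forks in norms with power type (\<beta>)-modulus\<close>

locale norm_fun =
  fixes N :: "'a::real_vector \<Rightarrow> real"
  assumes is_norm_fun: "is_norm_fun N"
begin

lemma triangle: "N (x + y) \<le> N x + N y"
  using is_norm_fun unfolding is_norm_fun_def by blast

lemma scale: "N (c *\<^sub>R x) = \<bar>c\<bar> * N x"
  using is_norm_fun unfolding is_norm_fun_def by blast

lemma zero [simp]: "N 0 = 0"
  using scale[of 0 0] by simp

lemma minus_commute: "N (x - y) = N (y - x)"
  using scale[of "-1" "x - y"] by simp

lemma triangle_diff: "N (x - z) \<le> N (x - y) + N (y - z)"
  using triangle[of "x - y" "y - z"] by simp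

end

text \<open>After scaling by 1/\<mu>, the vectors v - w 0 and w (n + 1) - u are admissible in the
  definition of the modulus, and twice v - u is their sum plus two legs of the fork.\<close>
lemma (in norm_fun) beta_modulus_fork:
  fixes w :: "nat \<Rightarrow> 'a"
  assumes "0 < \<mu>"
    and legs: "\<And>n. N (w n - u) \<le> \<mu>" "\<And>n. N (v - w n) \<le> \<mu>"
    and sep: "\<And>m n. m \<noteq> n \<Longrightarrow> s \<le> N (w m - w n)"
    and beta: "ereal b \<le> beta_modulus N (s / \<mu>)"
  shows "N (v - u) \<le> \<mu> * (2 - b)"
proof -
  have scaled: "N ((1/\<mu>) *\<^sub>R z) = N z / \<mu>" for z
    using scale[of "1/\<mu>" z] \<open>0 < \<mu>\<close> by simp
  define x where "x = (1/\<mu>) *\<^sub>R (v - w 0)"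
  define y where "y = (\<lambda>n. (1/\<mu>) *\<^sub>R (w (Suc n) - u))"
  define pairs where "pairs = {(x, y). x \<in> unit_ballN N \<and> range y \<subseteq> unit_ballN N
      \<and> sepN N y \<ge> ereal (s / \<mu>)}"
  define Sg where "Sg = (SUP xy \<in> pairs. (INF n. ereal (N (fst xy + snd xy n) / 2)))"
  have "sepN N y \<ge> ereal (s / \<mu>)"
    unfolding sepN_def
  proof (rule INF_greatest)
    fix mn :: "nat \<times> nat"
    assume "mn \<in> {(m, n). m \<noteq> n}"
    then obtain m n where "mn = (m, n)" "m \<noteq> n"
      by auto
    have "y m - y n = (1/\<mu>) *\<^sub>R (w (Suc m) - w (Suc n))"
      unfolding y_def by (simp add: algebra_simps)
    then show "ereal (s / \<mu>) \<le> ereal (N (y (fst mn) - y (snd mn)))"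
      using sep[of "Suc m" "Suc n"] \<open>mn = (m, n)\<close> \<open>m \<noteq> n\<close> \<open>0 < \<mu>\<close> by (simp add: scaled divide_right_mono)
  qed
  moreover have "x \<in> unit_ballN N" "range y \<subseteq> unit_ballN N"
    using legs \<open>0 < \<mu>\<close> unfolding unit_ballN_def x_def y_def by (auto simp: scaled)
  ultimately have "(x, y) \<in> pairs"
    unfolding pairs_def by simp
  have "ereal (N (v - u) / \<mu> - 1) \<le> (INF n. ereal (N (x + y n) / 2))"
  proof (rule INF_greatest)
    fix n
    have "2 * N (v - u) = N ((v - w 0) + (w (Suc n) - u) + ((w 0 - u) + (v - w (Suc n))))"
      using scale[of 2 "v - u"] by (simp add: algebra_simps scaleR_2)
    also have "\<dots> \<le> N ((v - w 0) + (w (Suc n) - u)) + N (w 0 - u) + N (v - w (Suc n))"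
      using triangle[of "(v - w 0) + (w (Suc n) - u)" "(w 0 - u) + (v - w (Suc n))"]
        triangle[of "w 0 - u" "v - w (Suc n)"] by linarith
    also have "\<dots> \<le> \<mu> * N (x + y n) + 2 * \<mu>"
      using legs[of 0] legs[of "Suc n"] \<open>0 < \<mu>\<close>
      by (simp add: x_def y_def scaled flip: scaleR_right_distrib)
    finally show "ereal (N (v - u) / \<mu> - 1) \<le> ereal (N (x + y n) / 2)"
      using \<open>0 < \<mu>\<close> by (simp add: field_simps)
  qed
  also have "\<dots> \<le> Sg"
    unfolding Sg_def using \<open>(x, y) \<in> pairs\<close> by (rule SUP_upper2) simp
  finally have lower: "ereal (N (v - u) / \<mu> - 1) \<le> Sg" .
  have upper: "ereal b \<le> 1 - Sg"
    using beta unfolding beta_modulus_def Sg_def pairs_def .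
  have "N (v - u) / \<mu> - 1 \<le> 1 - b"
    using lower upper by (cases Sg) (auto simp: one_ereal_def)
  then show ?thesis
    using \<open>0 < \<mu>\<close> by (simp add: field_simps)
qed

lemma powr_decrement_le:
  fixes m U L p :: real
  assumes "0 < m" "m \<le> U" "1 < p" "0 \<le> L"
  shows "L powr p * U powr (1 - p) \<le> m * (L / m) powr p"
proof -
  have "U powr (1 - p) \<le> m powr (1 - p)"
    using powr_mono2'[of "1 - p" m U] assms by simp
  then have "L powr p * U powr (1 - p) \<le> L powr p * m powr (1 - p)"
    by (simp add: mult_left_mono)
  also have "\<dots> = m * (L / m) powr p"
    using assms by (simp add: powr_diff powr_divide)
  finally show ?thesis .
qed

text \<open>An edge r s is bridged by the leg r b followed by the fork from b over the separated tips t_i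
  to s; the (\<beta>)-modulus makes the fork shorter than its two legs, by \<delta> after rescaling.\<close>
lemma (in norm_fun) parasol_edge_norm_bound:
  fixes f :: "pvert \<Rightarrow> 'a"
  assumes "0 < c" "1 < p" "0 < Lo" "0 < U"
    and beta: "\<And>t. 0 < t \<Longrightarrow> t \<le> 2 \<Longrightarrow> ereal (c * t powr p) \<le> beta_modulus N t"
    and edges: "\<And>E. length E = l \<Longrightarrow> N (f (snd (pend \<sigma> E)) - f (fst (pend \<sigma> E))) \<le> U"
    and tips: "\<And>E i j. length E < l \<Longrightarrow> i \<noteq> j \<Longrightarrow>
      Lo * 3 ^ (l - Suc (length E)) \<le> N (f (Inner E (PT i)) - f (Inner E (PT j)))"
    and "length E + j = l"
  shows "N (f (snd (pend \<sigma> E)) - f (fst (pend \<sigma> E)))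
    \<le> 3 ^ j * (U - real j * (c / 3 * Lo powr p * U powr (1 - p)))"
  using \<open>length E + j = l\<close>
proof (induction j arbitrary: E)
  case 0
  then show ?case using edges by simp
next
  case (Suc j)
  define \<delta> where "\<delta> = c / 3 * Lo powr p * U powr (1 - p)"
  define m where "m = U - real j * \<delta>"
  define r where "r = (if \<sigma> E then snd (pend \<sigma> E) else fst (pend \<sigma> E))"
  define s where "s = (if \<sigma> E then fst (pend \<sigma> E) else snd (pend \<sigma> E))"
  define b where "b = f (Inner E PB)"
  define w where "w = (\<lambda>n. f (Inner E (PT n)))"
  have IH: "N (f (snd (pend \<sigma> (a # E))) - f (fst (pend \<sigma> (a # E)))) \<le> 3 ^ j * m" for a
    using Suc by (simp add: m_def \<delta>_def del: pend.simps)
  have leg_r: "N (b - f r) \<le> 3 ^ j * m"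
    using IH[of RB] by (simp add: Let_def b_def r_def)
  have leg_b: "N (w n - b) \<le> 3 ^ j * m" for n
    using IH[of "BT n"] by (simp add: b_def w_def)
  have leg_s: "N (f s - w n) \<le> 3 ^ j * m" for n
    using IH[of "TS n"] by (simp add: Let_def s_def w_def)
  have "l - Suc (length E) = j"
    using Suc.prems by simp
  then have sep: "Lo * 3 ^ j \<le> N (w n - w n')" if "n \<noteq> n'" for n n'
    using tips[of E n n'] that Suc.prems by (simp add: w_def)
  have "Lo * 3 ^ j \<le> N (w 0 - b) + N (b - w 1)"
    using sep[of 0 1] triangle_diff[of "w 0" "w 1" b] by linarith
  also have "\<dots> \<le> 2 * (3 ^ j * m)"
    using leg_b[of 0] leg_b[of 1] minus_commute[of b "w 1"] by simp
  finally have sep_le: "Lo * 3 ^ j \<le> 2 * (3 ^ j * m)" .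
  then have "0 < m"
    using \<open>0 < Lo\<close> by (smt (verit) zero_less_mult_iff zero_less_power)
  have ratio: "Lo * 3 ^ j / (3 ^ j * m) = Lo / m"
    by simp
  have "ereal (c * (Lo / m) powr p) \<le> beta_modulus N (Lo * 3 ^ j / (3 ^ j * m))"
    unfolding ratio using beta \<open>0 < Lo\<close> \<open>0 < m\<close> sep_le by (simp add: field_simps)
  then have fork: "N (f s - b) \<le> 3 ^ j * m * (2 - c * (Lo / m) powr p)"
    using \<open>0 < m\<close> leg_b leg_s sep
    by (intro beta_modulus_fork[where s = "Lo * 3 ^ j" and w = w]) auto
  have "N (f s - f r) \<le> N (f s - b) + N (b - f r)"
    by (rule triangle_diff)
  also have "\<dots> \<le> 3 ^ j * (3 * m - c * (m * (Lo / m) powr p))"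
    using fork leg_r by (simp add: algebra_simps)
  also have "\<dots> \<le> 3 ^ j * (3 * (m - \<delta>))"
  proof -
    have "m \<le> U"
      using \<open>0 < c\<close> by (simp add: m_def \<delta>_def)
    then have "3 * \<delta> \<le> c * (m * (Lo / m) powr p)"
      using powr_decrement_le[of m U p Lo] \<open>0 < m\<close> \<open>0 < c\<close> assms(2,3)
      by (simp add: \<delta>_def mult_left_mono)
    then show ?thesis
      by simp
  qed
  also have "\<dots> = 3 ^ Suc j * (U - real (Suc j) * \<delta>)"
    by (simp add: m_def algebra_simps)
  finally have "N (f s - f r) \<le> 3 ^ Suc j * (U - real (Suc j) * \<delta>)" .
  moreover have "N (f (snd (pend \<sigma> E)) - f (fst (pend \<sigma> E))) = N (f s - f r)"
    unfolding r_def s_def using minus_commute by auto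
  ultimately show ?case
    unfolding \<delta>_def by simp
qed

lemma powr_bound_of_decrement:
  fixes U L \<kappa> p x :: real
  assumes "0 < U" "0 < L" "0 \<le> \<kappa>" "0 < p" "0 \<le> x"
    and "L \<le> U - x * (\<kappa> * L powr p * U powr (1 - p))"
  shows "(\<kappa> * x) powr (1 / p) \<le> U / L"
proof -
  have "x * \<kappa> * L powr p * U powr (1 - p) \<le> U"
    using assms by (simp add: algebra_simps)
  then have "x * \<kappa> * L powr p * U \<le> U * U powr p"
    using \<open>0 < U\<close> by (simp add: powr_diff field_simps)
  then have "\<kappa> * x * L powr p \<le> U powr p"
    using \<open>0 < U\<close> by (simp add: algebra_simps)
  then have "\<kappa> * x \<le> (U / L) powr p"
    using assms by (simp add: powr_divide field_simps)
  then have "(\<kappa> * x) powr (1 / p) \<le> ((U / L) powr p) powr (1 / p)"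
    using assms by (intro powr_mono2) auto
  also have "\<dots> = U / L"
    using assms by (simp add: powr_powr)
  finally show ?thesis .
qed

lemma distortion_ge:
  fixes f :: "'v \<Rightarrow> 'a::real_normed_vector"
  assumes "u0 \<in> V" "v0 \<in> V" "u0 \<noteq> v0" "0 < d u0 v0" "inj_on f V"
    and bound: "\<And>A B. 0 < A \<Longrightarrow> 0 < B
      \<Longrightarrow> (\<And>u v. u \<in> V \<Longrightarrow> v \<in> V \<Longrightarrow> u \<noteq> v \<Longrightarrow> norm (f u - f v) / d u v \<le> A)
      \<Longrightarrow> (\<And>u v. u \<in> V \<Longrightarrow> v \<in> V \<Longrightarrow> u \<noteq> v \<Longrightarrow> d u v / norm (f u - f v) \<le> B)
      \<Longrightarrow> K \<le> A * B"
  shows "ereal K \<le> distortion V d f"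
proof -
  define P where "P = {(u, v). u \<in> V \<and> v \<in> V \<and> u \<noteq> v}"
  define A where "A = (SUP uv \<in> P. ereal (norm (f (fst uv) - f (snd uv)) / d (fst uv) (snd uv)))"
  define B where "B = (SUP uv \<in> P. ereal (d (fst uv) (snd uv) / norm (f (fst uv) - f (snd uv))))"
  have A_ge: "ereal (norm (f u - f v) / d u v) \<le> A" if "u \<in> V" "v \<in> V" "u \<noteq> v" for u v
    unfolding A_def P_def using that by (force intro: SUP_upper2)
  have B_ge: "ereal (d u v / norm (f u - f v)) \<le> B" if "u \<in> V" "v \<in> V" "u \<noteq> v" for u v
    unfolding B_def P_def using that by (force intro: SUP_upper2)
  have "0 < norm (f u0 - f v0)"
    using assms(1-3,5) by (auto dest: inj_onD)
  then have "0 < A" "0 < B"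
    using A_ge[OF assms(1-3)] B_ge[OF assms(1-3)] \<open>0 < d u0 v0\<close>
    by (metis divide_pos_pos ereal_less(2) order_less_le_trans zero_ereal_def)+
  have "distortion V d f = A * B"
    unfolding distortion_def A_def B_def P_def by simp
  moreover have "ereal K \<le> A * B"
  proof (cases A; cases B)
    fix A' B' assume "A = ereal A'" "B = ereal B'"
    then show ?thesis
      using bound[of A' B'] \<open>0 < A\<close> \<open>0 < B\<close> A_ge B_ge by simp
  qed (use \<open>0 < A\<close> \<open>0 < B\<close> in auto)
  ultimately show ?thesis
    by simp
qed

lemma (in norm_fun) parasol_stretch_ratio:
  fixes f :: "pvert \<Rightarrow> 'a"
  assumes "0 < c" "1 < p" "0 < Lo" "0 < U"
    and beta: "\<And>t. 0 < t \<Longrightarrow> t \<le> 2 \<Longrightarrow> ereal (c * t powr p) \<le> beta_modulus N t"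
    and edges: "\<And>E. length E = l \<Longrightarrow> N (f (snd (pend \<sigma> E)) - f (fst (pend \<sigma> E))) \<le> U"
    and lower: "\<And>u v. u \<in> pverts \<sigma> l \<Longrightarrow> v \<in> pverts \<sigma> l \<Longrightarrow> u \<noteq> v
      \<Longrightarrow> Lo * pdist \<sigma> l u v \<le> N (f u - f v)"
  shows "(c / 3 * real l) powr (1 / p) \<le> U / Lo"
proof -
  have tips: "Lo * 3 ^ (l - Suc (length E)) \<le> N (f (Inner E (PT i)) - f (Inner E (PT j)))"
    if "length E < l" "i \<noteq> j" for E i j
  proof -
    have "Inner E (PT k) \<in> pverts \<sigma> l" for k
      using endpoint_in_pverts[of \<sigma> "BT k # E"] that(1) by (simp add: is_endpoint_def)
    moreover have "Lo * 3 ^ (l - Suc (length E)) \<le> Lo * pdist \<sigma> l (Inner E (PT i)) (Inner E (PT j))"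
      using pdist_tips[OF that] \<open>0 < Lo\<close> by simp
    ultimately show ?thesis
      using lower[of "Inner E (PT i)" "Inner E (PT j)"] that(2) by fastforce
  qed
  have "R \<in> pverts \<sigma> l" "S \<in> pverts \<sigma> l"
    using endpoint_in_pverts[of \<sigma> "[]"] by (auto simp: is_endpoint_def)
  moreover have "Lo * 3 ^ l \<le> Lo * pdist \<sigma> l R S"
    using pdist_R_S[where \<sigma> = \<sigma> and l = l] \<open>0 < Lo\<close> by simp
  ultimately have "Lo * 3 ^ l \<le> N (f S - f R)"
    using lower[of R S] minus_commute[of "f R"] by fastforce
  also have "\<dots> \<le> 3 ^ l * (U - real l * (c / 3 * Lo powr p * U powr (1 - p)))"
    using parasol_edge_norm_bound[OF assms(1-4) beta edges tips, of "[]" l] by simp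
  finally have "Lo \<le> U - real l * (c / 3 * Lo powr p * U powr (1 - p))"
    by simp
  then show ?thesis
    using assms by (intro powr_bound_of_decrement) auto
qed

lemma parasol_distortion_factors:
  fixes N :: "'a::real_normed_vector \<Rightarrow> real" and f :: "pvert \<Rightarrow> 'a"
  assumes "is_norm_fun N" "0 < c" "1 < p"
    and beta: "\<And>t. 0 < t \<Longrightarrow> t \<le> 2 \<Longrightarrow> ereal (c * t powr p) \<le> beta_modulus N t"
    and "0 < a" "0 < b" and equiv: "\<And>x. a * norm x \<le> N x \<and> N x \<le> b * norm x"
    and "inj_on f (pverts \<sigma> l)" "0 < A" "0 < B"
    and lip: "\<And>u v. u \<in> pverts \<sigma> l \<Longrightarrow> v \<in> pverts \<sigma> l \<Longrightarrow> u \<noteq> v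
      \<Longrightarrow> norm (f u - f v) / pdist \<sigma> l u v \<le> A"
    and colip: "\<And>u v. u \<in> pverts \<sigma> l \<Longrightarrow> v \<in> pverts \<sigma> l \<Longrightarrow> u \<noteq> v
      \<Longrightarrow> pdist \<sigma> l u v / norm (f u - f v) \<le> B"
  shows "a / b * (c / 3) powr (1 / p) * real l powr (1 / p) \<le> A * B"
proof -
  interpret norm_fun N
    by unfold_locales fact
  have edges: "N (f (snd (pend \<sigma> E)) - f (fst (pend \<sigma> E))) \<le> b * A" if "length E = l" for E
  proof (cases "fst (pend \<sigma> E) = snd (pend \<sigma> E)")
    case False
    have "padj \<sigma> l (snd (pend \<sigma> E)) (fst (pend \<sigma> E))"
      unfolding padj_def using that by auto
    then have "norm (f (snd (pend \<sigma> E)) - f (fst (pend \<sigma> E))) \<le> A"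
      using lip[of "snd (pend \<sigma> E)" "fst (pend \<sigma> E)"] endpoint_in_pverts[of \<sigma> E] that False
      by (simp add: pdist_padj is_endpoint_def)
    then show ?thesis
      using equiv[of "f (snd (pend \<sigma> E)) - f (fst (pend \<sigma> E))"] \<open>0 < b\<close>
      by (smt (verit, best) mult_left_mono)
  qed (use assms in simp)
  have lower: "a / B * pdist \<sigma> l u v \<le> N (f u - f v)"
    if "u \<in> pverts \<sigma> l" "v \<in> pverts \<sigma> l" "u \<noteq> v" for u v
  proof -
    have "0 < norm (f u - f v)"
      using that \<open>inj_on f (pverts \<sigma> l)\<close> by (auto dest: inj_onD)
    then have "pdist \<sigma> l u v \<le> B * norm (f u - f v)"
      using colip[OF that] by (simp add: field_simps)
    then have "a / B * pdist \<sigma> l u v \<le> a * norm (f u - f v)"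
      using assms by (simp add: field_simps)
    then show ?thesis
      using equiv by (meson order_trans)
  qed
  have "(c / 3 * real l) powr (1 / p) \<le> b * A / (a / B)"
    using assms by (intro parasol_stretch_ratio[OF _ _ _ _ beta edges lower]) simp_all
  moreover have "(c / 3 * real l) powr (1 / p) = (c / 3) powr (1 / p) * real l powr (1 / p)"
    by (rule powr_mult)
  ultimately show ?thesis
    using assms by (simp add: field_simps)
qed

theorem theorem4:
  fixes p :: real and N :: "'a::banach \<Rightarrow> real"
  assumes "1 < p"
    and "equivalent_norm N"
    and "beta_power_type N p"
  shows "\<exists>C>0. \<forall>\<sigma> l. l \<ge> 1 \<longrightarrow>
           c_dist TYPE('a) (pverts \<sigma> l) (pdist \<sigma> l) \<ge> ereal (C * real l powr (1 / p))"
proof -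
  obtain a b where norm: "is_norm_fun N" and "0 < a" "0 < b"
    and equiv: "\<And>x. a * norm x \<le> N x \<and> N x \<le> b * norm x"
    using assms(2) unfolding equivalent_norm_def by blast
  obtain c where "0 < c"
    and beta: "\<And>t. 0 < t \<Longrightarrow> t \<le> 2 \<Longrightarrow> ereal (c * t powr p) \<le> beta_modulus N t"
    using assms(3) unfolding beta_power_type_def by blast
  define C where "C = a / b * (c / 3) powr (1 / p)"
  have "ereal (C * real l powr (1 / p)) \<le> c_dist TYPE('a) (pverts \<sigma> l) (pdist \<sigma> l)" for \<sigma> l
    unfolding c_dist_def
  proof (rule INF_greatest, clarify)
    fix f :: "pvert \<Rightarrow> 'a"
    assume inj: "inj_on f (pverts \<sigma> l)"
    have "R \<in> pverts \<sigma> l" "S \<in> pverts \<sigma> l"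
      using endpoint_in_pverts[of \<sigma> "[]"] by (auto simp: is_endpoint_def)
    moreover have "0 < pdist \<sigma> l R S"
      using pdist_R_S[where \<sigma> = \<sigma> and l = l] by (smt (verit) zero_less_power)
    ultimately show "ereal (C * real l powr (1 / p)) \<le> distortion (pverts \<sigma> l) (pdist \<sigma> l) f"
      unfolding C_def
      using parasol_distortion_factors[OF norm \<open>0 < c\<close> \<open>1 < p\<close> beta \<open>0 < a\<close> \<open>0 < b\<close> equiv inj]
      by (intro distortion_ge[OF _ _ _ _ inj]) auto
  qed
  moreover have "0 < C"
    using \<open>0 < a\<close> \<open>0 < b\<close> \<open>0 < c\<close> by (simp add: C_def)
  ultimately show ?thesis
    by blast
qed

end
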